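(* Let $n\geqslant0$, $q=3^{2n+1}$, $A=\{\alpha-\alpha^{3^{n+1}}:\alpha\in\mathbb{F}_q\}$, and for $t\in\mathbb{F}_q$ let $tA=\{ta:a\in A\}$. Let $T\subseteq\mathbb{F}_q^\times$, $T^{-1}=\{t^{-1}:t\in T\}$, and let $\mathrm{span}_{\mathbb{F}_3}(T^{-1})$ be the $\mathbb{F}_3$-subspace of $\mathbb{F}_q$ spanned by $T^{-1}$. Then $$\bigcap_{t\in T}tA=\bigcap_{0\neq s\in\mathrm{span}_{\mathbb{F}_3}(T^{-1})}s^{-1}A.$$
   Context: $A$ is an $\mathbb{F}_3$-subspace of $\mathbb{F}_q$ (it equals the kernel of the trace map $\mathbb{F}_q\to\mathbb{F}_3$). An intersection over an empty index set is taken to be $\mathbb{F}_q$. *)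

theory Defs
  imports Main
begin

text \<open>F_3-linear span in a field of characteristic 3: the prime field is the image
  of the integers, so F_3-linear combinations are sums of integer multiples.\<close>
definition F3_span :: "'a::field set \<Rightarrow> 'a set" where
  "F3_span S = {(\<Sum>x\<in>F. of_int (c x) * x) | F c. finite F \<and> F \<subseteq> S}"

definition Aset :: "nat \<Rightarrow> 'a::field set" where
  "Aset n = {\<alpha> - \<alpha> ^ (3 ^ (n + 1)) | \<alpha>. True}"

definition dil :: "'a::field \<Rightarrow> 'a set \<Rightarrow> 'a set" where
  "dil t A = (\<lambda>a. t * a) ` A"

end

theory Submission
  imports Defs "HOL-Number_Theory.Residues"
begin

text \<open>In characteristic 3 the map \<open>\<alpha> \<mapsto> \<alpha> - \<alpha>^(3^(n+1))\<close> is additive (Freshman's dream),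
  so \<open>A\<close> is an additive subgroup. For \<open>t \<noteq> 0\<close> we have \<open>x \<in> tA\<close> iff \<open>t\<inverse>x \<in> A\<close>, hence
  \<open>x \<in> \<Inter>t\<in>T. tA\<close> iff the additive subgroup \<open>{u. ux \<in> A}\<close> contains \<open>T\<inverse>\<close>, i.e. contains
  its integer span. The cardinality hypothesis only serves to fix the characteristic.\<close>

lemma CHAR_eq_prime_if_card_eq_power:
  assumes "card (UNIV :: 'a::{field,finite} set) = p ^ k" "prime p"
  shows "CHAR('a) = p"
proof -
  have "prime CHAR('a)"
    by (simp add: finite_imp_CHAR_pos prime_CHAR_semidom)
  moreover have "CHAR('a) dvd p ^ k"
    using CHAR_dvd_CARD assms(1) by metis
  ultimately have "CHAR('a) dvd p"
    using prime_dvd_power by blast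
  then show ?thesis
    using \<open>prime CHAR('a)\<close> assms(2) by (simp add: primes_dvd_imp_eq)
qed

lemma Aset_zero: "0 \<in> Aset n"
  unfolding Aset_def by (auto intro!: exI[of _ 0])

lemma Aset_uminus:
  assumes "x \<in> Aset n"
  shows "- x \<in> Aset n"
proof -
  obtain a where "x = a - a ^ 3 ^ (n + 1)"
    using assms by (auto simp: Aset_def)
  then have "- x = - a - (- a) ^ 3 ^ (n + 1)"
    by (simp add: power_minus_odd)
  then show ?thesis
    unfolding Aset_def by blast
qed

lemma Aset_add:
  assumes "CHAR('a::field) = 3" "x \<in> Aset n" "y \<in> (Aset n :: 'a set)"
  shows "x + y \<in> Aset n"
proof -
  obtain a b where "x = a - a ^ 3 ^ (n + 1)" "y = b - b ^ 3 ^ (n + 1)"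
    using assms(2,3) by (auto simp: Aset_def)
  moreover have "(a + b) ^ 3 ^ (n + 1) = a ^ 3 ^ (n + 1) + b ^ 3 ^ (n + 1)"
    using assms(1) by (intro freshmans_dream'[where n = "n + 1"]) simp_all
  ultimately have "x + y = (a + b) - (a + b) ^ 3 ^ (n + 1)"
    by simp
  then show ?thesis
    unfolding Aset_def by blast
qed

lemma F3_span_subset_subgroup:
  fixes B :: "'a::field set"
  assumes "S \<subseteq> B" "0 \<in> B"
    and add: "\<And>x y. x \<in> B \<Longrightarrow> y \<in> B \<Longrightarrow> x + y \<in> B"
    and uminus: "\<And>x. x \<in> B \<Longrightarrow> - x \<in> B"
  shows "F3_span S \<subseteq> B"
proof
  have of_int_mult: "of_int c * x \<in> B" if "x \<in> B" for c x
  proof (induction c rule: int_induct[where k = 0])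
    case base
    then show ?case using \<open>0 \<in> B\<close> by simp
  next
    case (step1 i)
    then show ?case using add[OF _ \<open>x \<in> B\<close>] by (simp add: distrib_right)
  next
    case (step2 i)
    then show ?case using add[OF _ uminus[OF \<open>x \<in> B\<close>]] by (simp add: left_diff_distrib)
  qed
  fix s assume "s \<in> F3_span S"
  then obtain F c where "finite F" "F \<subseteq> S" and s: "s = (\<Sum>x\<in>F. of_int (c x) * x)"
    by (auto simp: F3_span_def)
  from \<open>finite F\<close> \<open>F \<subseteq> S\<close> have "(\<Sum>x\<in>F. of_int (c x) * x) \<in> B"
  proof (induction F rule: finite_induct)
    case empty
    then show ?case using \<open>0 \<in> B\<close> by simp
  next
    case (insert x F)
    then have "x \<in> B" "(\<Sum>x\<in>F. of_int (c x) * x) \<in> B"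
      using \<open>S \<subseteq> B\<close> by auto
    then show ?case
      using insert.hyps by (simp add: add of_int_mult)
  qed
  then show "s \<in> B"
    using s by simp
qed

lemma subset_F3_span: "S \<subseteq> F3_span S"
proof
  fix s assume "s \<in> S"
  then show "s \<in> F3_span S"
    unfolding F3_span_def
    by (intro CollectI exI[of _ "{s}"] exI[of _ "\<lambda>_. 1"]) simp
qed

lemma mem_dil_iff:
  assumes "t \<noteq> 0"
  shows "x \<in> dil t A \<longleftrightarrow> inverse t * x \<in> A"
proof
  assume "x \<in> dil t A"
  then show "inverse t * x \<in> A"
    using assms by (auto simp: dil_def mult.assoc[symmetric])
next
  assume "inverse t * x \<in> A"
  moreover have "x = t * (inverse t * x)"
    using assms by simp
  ultimately show "x \<in> dil t A"
    unfolding dil_def by blast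
qed

lemma INT_dil_eq_INT_dil_F3_span:
  fixes A :: "'a::field set"
  assumes "0 \<notin> T" "0 \<in> A"
    and add: "\<And>x y. x \<in> A \<Longrightarrow> y \<in> A \<Longrightarrow> x + y \<in> A"
    and uminus: "\<And>x. x \<in> A \<Longrightarrow> - x \<in> A"
  shows "(\<Inter>t\<in>T. dil t A) = (\<Inter>s\<in>F3_span (inverse ` T) - {0}. dil (inverse s) A)"
proof (intro equalityI subsetI)
  fix x assume x: "x \<in> (\<Inter>t\<in>T. dil t A)"
  have "F3_span (inverse ` T) \<subseteq> {u. u * x \<in> A}"
  proof (rule F3_span_subset_subgroup)
    show "inverse ` T \<subseteq> {u. u * x \<in> A}"
    proof (rule image_subsetI)
      fix t assume "t \<in> T"
      then have "t \<noteq> 0" "x \<in> dil t A"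
        using x \<open>0 \<notin> T\<close> by auto
      then show "inverse t \<in> {u. u * x \<in> A}"
        by (simp add: mem_dil_iff)
    qed
    show "0 \<in> {u. u * x \<in> A}"
      using \<open>0 \<in> A\<close> by simp
    show "u + v \<in> {u. u * x \<in> A}" if "u \<in> {u. u * x \<in> A}" "v \<in> {u. u * x \<in> A}" for u v
      using add that by (simp add: distrib_right)
    show "- u \<in> {u. u * x \<in> A}" if "u \<in> {u. u * x \<in> A}" for u
      using uminus that by simp
  qed
  show "x \<in> (\<Inter>s\<in>F3_span (inverse ` T) - {0}. dil (inverse s) A)"
  proof
    fix s assume "s \<in> F3_span (inverse ` T) - {0}"
    then have "s * x \<in> A" "inverse s \<noteq> 0"
      using \<open>F3_span (inverse ` T) \<subseteq> {u. u * x \<in> A}\<close> by auto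
    then show "x \<in> dil (inverse s) A"
      by (simp add: mem_dil_iff)
  qed
next
  fix x assume x: "x \<in> (\<Inter>s\<in>F3_span (inverse ` T) - {0}. dil (inverse s) A)"
  show "x \<in> (\<Inter>t\<in>T. dil t A)"
  proof
    fix t assume "t \<in> T"
    then have "inverse t \<in> F3_span (inverse ` T) - {0}"
      using subset_F3_span[of "inverse ` T"] \<open>0 \<notin> T\<close> by auto
    then have "x \<in> dil (inverse (inverse t)) A"
      using x by blast
    then show "x \<in> dil t A"
      by simp
  qed
qed

theorem lemma4p1:
  fixes n :: nat and T :: "'a::{field,finite} set"
  assumes "card (UNIV :: 'a set) = 3 ^ (2 * n + 1)"
    and "T \<subseteq> UNIV - {0}"
  shows "(\<Inter>t\<in>T. dil t (Aset n :: 'a set))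
       = (\<Inter>s\<in>F3_span (inverse ` T) - {0}. dil (inverse s) (Aset n))"
proof (rule INT_dil_eq_INT_dil_F3_span)
  show "0 \<notin> T"
    using assms(2) by blast
  have "CHAR('a) = 3"
    using assms(1) by (rule CHAR_eq_prime_if_card_eq_power) simp
  then show "x + y \<in> Aset n" if "x \<in> Aset n" "y \<in> Aset n" for x y :: 'a
    using that by (rule Aset_add)
qed (fact Aset_zero, fact Aset_uminus)

end
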